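(* Consider MDVI$(\alpha,K,M)$ with any $\alpha\in[0,1)$ and positive integers $K,M$ on an MDP as in the context, and set $v_K := w_K - \alpha w_{K-1}$. Then, for every realization of the samples and every $k\in\{1,\dots,K\}$, $$v^{\pi'_{k-1}} + \sum_{j=0}^{k-1}\gamma^j\pi_{k-1}P_{k-1-j}^{k-2}\varepsilon_{k-j} - \gamma^kH\mathbf{1} \;\le\; v_k \;\le\; v^{\pi'_k} + \sum_{j=0}^{k-1}\gamma^j\pi_kP_{k-j}^{k-1}\varepsilon_{k-j} + \gamma^kH\mathbf{1}.$$
   Context: MDP: finite state set $\mathcal{X}$, finite action set $\mathcal{A}$, discount $\gamma\in[0,1)$, reward $r\in[-1,1]^{\mathcal{X}\times\mathcal{A}}$, transition kernel $P(y|x,a)$, $H=1/(1-\gamma)$. $P$ is the matrix with $(Pv)(x,a)=\sum_yP(y|x,a)v(y)$; a policy $\pi$ is the matrix with $(\pi q)(x)=\sum_a\pi(a|x)q(x,a)$; $P^\pi := P\pi$; $T^\pi q=r+\gamma P^\pi q$; $q^\pi$ its fixed point, $v^\pi=\pi q^\pi$. $\mathbf 1$ all-ones vector; inequalities componentwise. MDVI$(\alpha,K,M)$: $s_0 = 0$, $w_0=w_{-1}=0$; for $k=0,\dots,K-1$: $v_k = w_k-\alpha w_{k-1}$; for each $(x,a)$, independent samples $y_{k,m,x,a}\sim P(\cdot|x,a)$, $m\in[M]$; $q_{k+1}(x,a) = r(x,a)+\frac{\gamma}{M}\sum_m v_k(y_{k,m,x,a})$; $s_{k+1}=q_{k+1}+\alpha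 s_k$; $w_{k+1}(x)=\max_a s_{k+1}(x,a)$. $\pi_k$ ($k=0,\dots,K$) is a deterministic greedy policy w.r.t. $s_k$. Notation: $\widehat P_k v(x,a)=\frac1M\sum_mv(y_{k,m,x,a})$; $\varepsilon_k=\gamma\widehat P_{k-1}v_{k-1}-\gamma Pv_{k-1}$ for $k\in[K]$. For $i\ge j$, $P_j^i := P^{\pi_i}\cdots P^{\pi_j}$, and $P_j^i:=I$ if $i<j$. $\pi'_k$ is the non-stationary policy following $\pi_{k-t}$ at time step $t\le k$ and $\pi_0$ afterwards; its value is $v^{\pi'_k}=\pi_kT^{\pi_{k-1}}\cdots T^{\pi_1}q^{\pi_0}$ (so $v^{\pi'_0}=v^{\pi_0}$). *)

theory Defs
  imports Main "HOL-Analysis.Analysis"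
begin

text \<open>Transition kernel P x a y = P(y|x,a); reward r x a; discount gamma.\<close>

definition Ppi :: "('x::finite \<Rightarrow> 'a \<Rightarrow> 'x \<Rightarrow> real) \<Rightarrow> ('x \<Rightarrow> 'a) \<Rightarrow> ('x \<Rightarrow> 'a \<Rightarrow> real) \<Rightarrow> 'x \<Rightarrow> 'a \<Rightarrow> real" where
  "Ppi P p q = (\<lambda>x a. \<Sum>y\<in>UNIV. P x a y * q y (p y))"

definition Tpi :: "('x::finite \<Rightarrow> 'a \<Rightarrow> 'x \<Rightarrow> real) \<Rightarrow> ('x \<Rightarrow> 'a \<Rightarrow> real) \<Rightarrow> real \<Rightarrow> ('x \<Rightarrow> 'a) \<Rightarrow> ('x \<Rightarrow> 'a \<Rightarrow> real) \<Rightarrow> 'x \<Rightarrow> 'a \<Rightarrow> real" where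
  "Tpi P r \<gamma> p q = (\<lambda>x a. r x a + \<gamma> * Ppi P p q x a)"

text \<open>q^pol: the fixed point of T^pol (unique for gamma < 1).\<close>
definition qpi :: "('x::finite \<Rightarrow> 'a \<Rightarrow> 'x \<Rightarrow> real) \<Rightarrow> ('x \<Rightarrow> 'a \<Rightarrow> real) \<Rightarrow> real \<Rightarrow> ('x \<Rightarrow> 'a) \<Rightarrow> 'x \<Rightarrow> 'a \<Rightarrow> real" where
  "qpi P r \<gamma> p = (THE q. Tpi P r \<gamma> p q = q)"

text \<open>Qns k = T^{pi_(k-1)} ... T^{pi_1} q^{pi_0}  (for k = 0 and k = 1 this is q^{pi_0}).\<close>
fun Qns :: "('x::finite \<Rightarrow> 'a \<Rightarrow> 'x \<Rightarrow> real) \<Rightarrow> ('x \<Rightarrow> 'a \<Rightarrow> real) \<Rightarrow> real \<Rightarrow> (nat \<Rightarrow> 'x \<Rightarrow> 'a) \<Rightarrow> nat \<Rightarrow> 'x \<Rightarrow> 'a \<Rightarrow> real" where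
  "Qns P r \<gamma> pol 0 = qpi P r \<gamma> (pol 0)"
| "Qns P r \<gamma> pol (Suc 0) = qpi P r \<gamma> (pol 0)"
| "Qns P r \<gamma> pol (Suc (Suc k)) = Tpi P r \<gamma> (pol (Suc k)) (Qns P r \<gamma> pol (Suc k))"

text \<open>Value of the non-stationary policy pol'_k: v^{pol'_k} = pi_k T^{pi_(k-1)} ... T^{pi_1} q^{pi_0}.\<close>
definition vns :: "('x::finite \<Rightarrow> 'a \<Rightarrow> 'x \<Rightarrow> real) \<Rightarrow> ('x \<Rightarrow> 'a \<Rightarrow> real) \<Rightarrow> real \<Rightarrow> (nat \<Rightarrow> 'x \<Rightarrow> 'a) \<Rightarrow> nat \<Rightarrow> 'x \<Rightarrow> real" where
  "vns P r \<gamma> pol k = (\<lambda>x. Qns P r \<gamma> pol k x (pol k x))"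

fun Pseg :: "('x::finite \<Rightarrow> 'a \<Rightarrow> 'x \<Rightarrow> real) \<Rightarrow> (nat \<Rightarrow> 'x \<Rightarrow> 'a) \<Rightarrow> nat \<Rightarrow> nat \<Rightarrow> ('x \<Rightarrow> 'a \<Rightarrow> real) \<Rightarrow> 'x \<Rightarrow> 'a \<Rightarrow> real" where
  "Pseg P pol lo 0 q = q"
| "Pseg P pol lo (Suc n) q = Ppi P (pol (lo + n)) (Pseg P pol lo n q)"

text \<open>P_j^i = P^{pi_i} ... P^{pi_j} for i >= j, identity if i < j (integer indices, j >= 0).\<close>
definition Pji :: "('x::finite \<Rightarrow> 'a \<Rightarrow> 'x \<Rightarrow> real) \<Rightarrow> (nat \<Rightarrow> 'x \<Rightarrow> 'a) \<Rightarrow> int \<Rightarrow> int \<Rightarrow> ('x \<Rightarrow> 'a \<Rightarrow> real) \<Rightarrow> 'x \<Rightarrow> 'a \<Rightarrow> real" where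
  "Pji P pol j i q = Pseg P pol (nat j) (nat (i - j + 1)) q"

definition wmax :: "('x \<Rightarrow> 'a::finite \<Rightarrow> real) \<Rightarrow> 'x \<Rightarrow> real" where
  "wmax s x = Max (range (s x))"

text \<open>Samples: y k m x a = y_{k,m,x,a}, m ranging over {0..<M}.
  mdvi_s k = s_k; s_0 = 0; s_(k+1) = q_(k+1) + alpha s_k with
  q_(k+1)(x,a) = r(x,a) + gamma/M sum_m v_k(y_{k,m,x,a}), v_k = w_k - alpha w_(k-1), w_(-1) = 0.\<close>
fun mdvi_s :: "real \<Rightarrow> real \<Rightarrow> nat \<Rightarrow> ('x \<Rightarrow> 'a::finite \<Rightarrow> real) \<Rightarrow> (nat \<Rightarrow> nat \<Rightarrow> 'x \<Rightarrow> 'a \<Rightarrow> 'x) \<Rightarrow> nat \<Rightarrow> 'x \<Rightarrow> 'a \<Rightarrow> real" where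
  "mdvi_s \<gamma> \<alpha> M r y 0 = (\<lambda>x a. 0)"
| "mdvi_s \<gamma> \<alpha> M r y (Suc k) = (\<lambda>x a.
     r x a + \<gamma> / real M * (\<Sum>m<M.
        wmax (mdvi_s \<gamma> \<alpha> M r y k) (y k m x a)
        - \<alpha> * (if k = 0 then 0 else wmax (mdvi_s \<gamma> \<alpha> M r y (k - 1)) (y k m x a)))
     + \<alpha> * mdvi_s \<gamma> \<alpha> M r y k x a)"

definition mdvi_w :: "real \<Rightarrow> real \<Rightarrow> nat \<Rightarrow> ('x \<Rightarrow> 'a::finite \<Rightarrow> real) \<Rightarrow> (nat \<Rightarrow> nat \<Rightarrow> 'x \<Rightarrow> 'a \<Rightarrow> 'x) \<Rightarrow> nat \<Rightarrow> 'x \<Rightarrow> real" where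
  "mdvi_w \<gamma> \<alpha> M r y k = wmax (mdvi_s \<gamma> \<alpha> M r y k)"

definition mdvi_v :: "real \<Rightarrow> real \<Rightarrow> nat \<Rightarrow> ('x \<Rightarrow> 'a::finite \<Rightarrow> real) \<Rightarrow> (nat \<Rightarrow> nat \<Rightarrow> 'x \<Rightarrow> 'a \<Rightarrow> 'x) \<Rightarrow> nat \<Rightarrow> 'x \<Rightarrow> real" where
  "mdvi_v \<gamma> \<alpha> M r y k = (\<lambda>x. mdvi_w \<gamma> \<alpha> M r y k x
      - \<alpha> * (if k = 0 then 0 else mdvi_w \<gamma> \<alpha> M r y (k - 1) x))"

definition mdvi_eps :: "('x::finite \<Rightarrow> 'a \<Rightarrow> 'x \<Rightarrow> real) \<Rightarrow> real \<Rightarrow> real \<Rightarrow> nat \<Rightarrow> ('x \<Rightarrow> 'a::finite \<Rightarrow> real) \<Rightarrow> (nat \<Rightarrow> nat \<Rightarrow> 'x \<Rightarrow> 'a \<Rightarrow> 'x) \<Rightarrow> nat \<Rightarrow> 'x \<Rightarrow> 'a \<Rightarrow> real" where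
  "mdvi_eps P \<gamma> \<alpha> M r y k = (\<lambda>x a.
      \<gamma> * ((1 / real M) * (\<Sum>m<M. mdvi_v \<gamma> \<alpha> M r y (k - 1) (y (k - 1) m x a)))
    - \<gamma> * (\<Sum>z\<in>UNIV. P x a z * mdvi_v \<gamma> \<alpha> M r y (k - 1) z))"

end

theory Submission
  imports Defs
begin

(* Write q_k = s_k - alpha s_(k-1) for the Q-function of MDVI.  Then q_(k+1) = r + gamma P v_k + eps_(k+1),
   and greediness of pi_k and pi_(k-1) sandwiches v_k between q_k(., pi_(k-1)) and q_k(., pi_k), so
     T^(pi_(k-1)) q_k + eps_(k+1) <= q_(k+1) <= T^(pi_k) q_k + eps_(k+1).
   The non-stationary Q-values satisfy this recursion exactly without the error term, and the propagated
   errors sum_j gamma^j P eps_(k-j) satisfy it without the reward.  Hence the remainder d_k satisfies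
   d_(k+1) <= gamma P^(sigma_k) d_k for a suitable policy sequence sigma, starting from
   |d_1| = |r - q^(pi_0)| <= gamma H; as stochastic matrices are monotone and fix constants, d_k decays
   like gamma^k H. *)

lemma Ppi_add: "Ppi P p (\<lambda>x a. f x a + g x a) x a = Ppi P p f x a + Ppi P p g x a"
  by (simp add: Ppi_def sum.distrib algebra_simps)

lemma Ppi_diff: "Ppi P p (\<lambda>x a. f x a - g x a) x a = Ppi P p f x a - Ppi P p g x a"
  by (simp add: Ppi_def sum_subtractf algebra_simps)

lemma Ppi_cmult: "Ppi P p (\<lambda>x a. c * f x a) x a = c * Ppi P p f x a"
  by (simp add: Ppi_def sum_distrib_left mult_ac)

lemma Ppi_sum: "Ppi P p (\<lambda>x a. \<Sum>j\<in>A. f j x a) x a = (\<Sum>j\<in>A. Ppi P p (f j) x a)"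
  by (simp add: Ppi_def sum_distrib_left sum.swap[of _ A])

lemma Ppi_state_function: "Ppi P p (\<lambda>z b. f z) x a = (\<Sum>z\<in>UNIV. P x a z * f z)"
  by (simp add: Ppi_def)

lemma abs_le_by_discounted_Max:
  fixes d :: "'x::finite \<Rightarrow> 'a::finite \<Rightarrow> real"
  assumes "\<gamma> < 1"
    and bound: "\<And>B x a. (\<And>x' a'. \<bar>d x' a'\<bar> \<le> B) \<Longrightarrow> \<bar>d x a\<bar> \<le> c + \<gamma> * B"
  shows "\<bar>d x a\<bar> \<le> c / (1 - \<gamma>)"
proof -
  define m where "m = Max (range (\<lambda>(x, a). \<bar>d x a\<bar>))"
  have le_m: "\<bar>d x' a'\<bar> \<le> m" for x' a'
    unfolding m_def by (rule Max_ge) (auto intro: image_eqI[where x = "(x', a')"])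
  have "m \<le> c + \<gamma> * m"
    unfolding m_def by (rule Max.boundedI) (auto intro: bound le_m[unfolded m_def])
  then have "m \<le> c / (1 - \<gamma>)"
    using assms(1) by (simp add: pos_le_divide_eq algebra_simps)
  with le_m show ?thesis by (rule order_trans)
qed

locale stochastic_kernel =
  fixes P :: "'x::finite \<Rightarrow> 'a::finite \<Rightarrow> 'x \<Rightarrow> real"
  assumes nonneg: "\<And>x a z. 0 \<le> P x a z"
    and sum_one: "\<And>x a. (\<Sum>z\<in>UNIV. P x a z) = 1"
begin

lemma Ppi_mono: "(\<And>z. f z (p z) \<le> g z (p z)) \<Longrightarrow> Ppi P p f x a \<le> Ppi P p g x a"
  unfolding Ppi_def by (intro sum_mono mult_left_mono) (simp_all add: nonneg)

lemma Ppi_const: "Ppi P p (\<lambda>x a. c) x a = c"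
  by (simp add: Ppi_def sum_distrib_right[symmetric] sum_one)

lemma Ppi_abs_le:
  assumes "\<And>x a. \<bar>f x a\<bar> \<le> B"
  shows "\<bar>Ppi P p f x a\<bar> \<le> B"
proof -
  have "Ppi P p f x a \<le> Ppi P p (\<lambda>x a. B) x a"
    by (rule Ppi_mono) (meson assms abs_le_D1)
  moreover have "Ppi P p (\<lambda>x a. - B) x a \<le> Ppi P p f x a"
    by (rule Ppi_mono) (meson assms abs_le_D2 minus_le_iff)
  ultimately show ?thesis by (simp add: Ppi_const)
qed

end

locale discounted_kernel = stochastic_kernel P
  for P :: "'x::finite \<Rightarrow> 'a::finite \<Rightarrow> 'x \<Rightarrow> real" +
  fixes \<gamma> :: real
  assumes discount_nonneg: "0 \<le> \<gamma>" and discount_less_one: "\<gamma> < 1"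
begin

lemma abs_Ppi_discounted_le:
  assumes "\<And>x a. \<bar>f x a\<bar> \<le> B"
  shows "\<bar>\<gamma> * Ppi P p f x a\<bar> \<le> \<gamma> * B"
  using Ppi_abs_le[OF assms] discount_nonneg by (simp add: abs_mult mult_left_mono)

lemma discounted_fixpoint_zero:
  assumes "\<And>x a. d x a = \<gamma> * Ppi P p d x a"
  shows "d x a = 0"
proof -
  have "\<bar>d x a\<bar> \<le> 0 / (1 - \<gamma>)"
    by (rule abs_le_by_discounted_Max[OF discount_less_one])
      (metis assms abs_Ppi_discounted_le add_0)
  then show ?thesis by simp
qed

lemma Tpi_fixpoint_unique:
  assumes "Tpi P r \<gamma> p q = q" and "Tpi P r \<gamma> p q' = q'"
  shows "q = q'"
proof -
  have "q x a - q' x a = \<gamma> * Ppi P p (\<lambda>x a. q x a - q' x a) x a" for x a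
    using fun_cong[OF fun_cong[OF assms(1)]] fun_cong[OF fun_cong[OF assms(2)]]
    by (simp add: Tpi_def Ppi_diff) (metis add_diff_cancel_left right_diff_distrib)
  then have "q x a - q' x a = 0" for x a
    by (rule discounted_fixpoint_zero)
  then show ?thesis by fastforce
qed

(* q - gamma P^p q is injective on the finite-dimensional space of Q-functions
   (discounted_fixpoint_zero), hence surjective; a preimage of r is the fixed point. *)
lemma Tpi_fixpoint_exists: "\<exists>q. Tpi P r \<gamma> p q = q"
proof -
  define L where
    "L v = (\<chi> i. v $ i - \<gamma> * Ppi P p (\<lambda>x a. v $ (x, a)) (fst i) (snd i))" for v
  have "linear L"
    by (rule linearI) (simp_all add: L_def vec_eq_iff Ppi_def sum.distrib sum_distrib_left
        algebra_simps)
  moreover have "inj L"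
  proof (rule injI)
    fix u v assume "L u = L v"
    then have "u $ (x, a) - v $ (x, a)
        = \<gamma> * Ppi P p (\<lambda>x a. u $ (x, a) - v $ (x, a)) x a" for x a
      unfolding L_def vec_eq_iff by (simp add: Ppi_diff algebra_simps)
    then have "u $ (x, a) - v $ (x, a) = 0" for x a
      by (rule discounted_fixpoint_zero)
    then show "u = v" by (simp add: vec_eq_iff)
  qed
  ultimately obtain v where "L v = (\<chi> i. r (fst i) (snd i))"
    by (metis linear_injective_imp_surjective surjD)
  then have "L v $ (x, a) = r x a" for x a
    by simp
  then have "v $ (x, a) - \<gamma> * Ppi P p (\<lambda>x a. v $ (x, a)) x a = r x a" for x a
    by (simp add: L_def)
  then have "Tpi P r \<gamma> p (\<lambda>x a. v $ (x, a)) = (\<lambda>x a. v $ (x, a))"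
    unfolding Tpi_def by (intro ext) (metis diff_add_cancel add.commute)
  then show ?thesis by blast
qed

lemma qpi_fixpoint: "Tpi P r \<gamma> p (qpi P r \<gamma> p) = qpi P r \<gamma> p"
proof -
  obtain q where "Tpi P r \<gamma> p q = q"
    using Tpi_fixpoint_exists by blast
  then have "\<exists>!q. Tpi P r \<gamma> p q = q"
    using Tpi_fixpoint_unique by auto
  then show ?thesis
    unfolding qpi_def by (rule theI')
qed

lemma qpi_eq: "qpi P r \<gamma> p x a = r x a + \<gamma> * Ppi P p (qpi P r \<gamma> p) x a"
  by (subst qpi_fixpoint[symmetric]) (simp add: Tpi_def)

lemma qpi_minus_reward_bound:
  assumes "\<And>x a. \<bar>r x a\<bar> \<le> R"
  shows "\<bar>qpi P r \<gamma> p x a - r x a\<bar> \<le> \<gamma> * (R / (1 - \<gamma>))"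
proof -
  have "\<bar>qpi P r \<gamma> p x a\<bar> \<le> R / (1 - \<gamma>)" for x a
  proof (rule abs_le_by_discounted_Max[OF discount_less_one])
    fix B x a assume "\<And>x' a'. \<bar>qpi P r \<gamma> p x' a'\<bar> \<le> B"
    then have "\<bar>\<gamma> * Ppi P p (qpi P r \<gamma> p) x a\<bar> \<le> \<gamma> * B"
      by (rule abs_Ppi_discounted_le)
    then show "\<bar>qpi P r \<gamma> p x a\<bar> \<le> R + \<gamma> * B"
      using assms[of x a] qpi_eq[of r p x a] unfolding abs_le_iff by linarith
  qed
  then have "\<bar>\<gamma> * Ppi P p (qpi P r \<gamma> p) x a\<bar> \<le> \<gamma> * (R / (1 - \<gamma>))"
    by (rule abs_Ppi_discounted_le)
  then show ?thesis
    using qpi_eq[of r p x a] by simp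
qed

lemma Qns_Suc: "Qns P r \<gamma> pol (Suc k) = Tpi P r \<gamma> (pol k) (Qns P r \<gamma> pol k)"
  by (cases k) (simp_all add: qpi_fixpoint)

lemma discounted_subsolution_decay:
  assumes base: "\<And>x a. d 1 x a \<le> c"
    and step: "\<And>k x a. 1 \<le> k \<Longrightarrow> k < n \<Longrightarrow> d (Suc k) x a \<le> \<gamma> * Ppi P (\<sigma> k) (d k) x a"
    and "1 \<le> k" "k \<le> n"
  shows "d k x a \<le> \<gamma> ^ (k - 1) * c"
  using assms(3,4)
proof (induction k arbitrary: x a rule: nat_induct_at_least)
  case base
  then show ?case using assms(1) by simp
next
  case (Suc k)
  have "d (Suc k) x a \<le> \<gamma> * Ppi P (\<sigma> k) (d k) x a"
    using step Suc by simp
  also have "\<dots> \<le> \<gamma> * Ppi P (\<sigma> k) (\<lambda>x a. \<gamma> ^ (k - 1) * c) x a"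
    using Suc by (intro mult_left_mono Ppi_mono discount_nonneg) simp
  also have "\<dots> = \<gamma> ^ (Suc k - 1) * c"
    using \<open>1 \<le> k\<close> by (simp add: Ppi_const power_eq_if)
  finally show ?case .
qed

end

definition propagated_error ::
  "('x::finite \<Rightarrow> 'a \<Rightarrow> 'x \<Rightarrow> real) \<Rightarrow> (nat \<Rightarrow> 'x \<Rightarrow> 'a) \<Rightarrow> real
    \<Rightarrow> (nat \<Rightarrow> 'x \<Rightarrow> 'a \<Rightarrow> real) \<Rightarrow> nat \<Rightarrow> 'x \<Rightarrow> 'a \<Rightarrow> real" where
  "propagated_error P \<sigma> \<gamma> e k = (\<lambda>x a. \<Sum>j<k. \<gamma> ^ j * Pseg P \<sigma> (k - j) j (e (k - j)) x a)"

lemma propagated_error_Suc: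
  "propagated_error P \<sigma> \<gamma> e (Suc k) x a
    = e (Suc k) x a + \<gamma> * Ppi P (\<sigma> k) (propagated_error P \<sigma> \<gamma> e k) x a"
proof -
  have "propagated_error P \<sigma> \<gamma> e (Suc k) x a
      = e (Suc k) x a + (\<Sum>j<k. \<gamma> * (\<gamma> ^ j * Ppi P (\<sigma> k) (Pseg P \<sigma> (k - j) j (e (k - j))) x a))"
    unfolding propagated_error_def
    by (subst sum.lessThan_Suc_shift) (auto intro!: sum.cong)
  also have "\<dots> = e (Suc k) x a + \<gamma> * Ppi P (\<sigma> k) (propagated_error P \<sigma> \<gamma> e k) x a"
    unfolding propagated_error_def by (simp only: Ppi_sum Ppi_cmult sum_distrib_left)
  finally show ?thesis .
qed

lemma Pseg_shift: "Pseg P (\<lambda>i. \<sigma> (i - 1)) (Suc lo) n q = Pseg P \<sigma> lo n q"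
  by (induction n) simp_all

lemma Pji_eq_Pseg: "Pji P \<sigma> (int k - int j) (int k - 1) q = Pseg P \<sigma> (k - j) j q"
proof -
  have "nat (int k - int j) = k - j" "nat (int k - 1 - (int k - int j) + 1) = j"
    by simp_all
  then show ?thesis
    unfolding Pji_def by (simp only:)
qed

lemma sum_Pji_eq_propagated_error:
  "(\<Sum>j<k. \<gamma> ^ j * Pji P \<sigma> (int k - int j) (int k - 1) (e (k - j)) x a)
    = propagated_error P \<sigma> \<gamma> e k x a"
  unfolding propagated_error_def Pji_eq_Pseg ..

lemma sum_Pji_prev_eq_propagated_error:
  assumes "1 \<le> k"
  shows "(\<Sum>j<k. \<gamma> ^ j * Pji P \<sigma> (int k - 1 - int j) (int k - 2) (e (k - j)) x a)
    = propagated_error P (\<lambda>i. \<sigma> (i - 1)) \<gamma> e k x a"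
  unfolding propagated_error_def
proof (rule sum.cong)
  fix j assume "j \<in> {..<k}"
  then have "int k - 1 - int j = int (k - 1) - int j" "int k - 2 = int (k - 1) - 1"
    "k - j = Suc (k - 1 - j)"
    using assms by auto
  then show "\<gamma> ^ j * Pji P \<sigma> (int k - 1 - int j) (int k - 2) (e (k - j)) x a
      = \<gamma> ^ j * Pseg P (\<lambda>i. \<sigma> (i - 1)) (k - j) j (e (k - j)) x a"
    by (simp only: Pji_eq_Pseg Pseg_shift)
qed simp

(* Since s_k = q_k + alpha s_(k-1), this recovers the q_k of MDVI for k >= 1. *)
definition mdvi_q :: "real \<Rightarrow> real \<Rightarrow> nat \<Rightarrow> ('x \<Rightarrow> 'a::finite \<Rightarrow> real)
    \<Rightarrow> (nat \<Rightarrow> nat \<Rightarrow> 'x \<Rightarrow> 'a \<Rightarrow> 'x) \<Rightarrow> nat \<Rightarrow> 'x \<Rightarrow> 'a \<Rightarrow> real" where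
  "mdvi_q \<gamma> \<alpha> M r y k = (\<lambda>x a. mdvi_s \<gamma> \<alpha> M r y k x a - \<alpha> * mdvi_s \<gamma> \<alpha> M r y (k - 1) x a)"

lemma mdvi_q_Suc:
  "mdvi_q \<gamma> \<alpha> M r y (Suc k) x a
    = r x a + \<gamma> * (\<Sum>z\<in>UNIV. P x a z * mdvi_v \<gamma> \<alpha> M r y k z) + mdvi_eps P \<gamma> \<alpha> M r y (Suc k) x a"
  by (simp add: mdvi_q_def mdvi_eps_def mdvi_v_def mdvi_w_def cong: if_cong)

lemma mdvi_s_le_w: "mdvi_s \<gamma> \<alpha> M r y k x a \<le> mdvi_w \<gamma> \<alpha> M r y k x"
  unfolding mdvi_w_def wmax_def by (rule Max_ge) auto

locale mdvi = discounted_kernel P \<gamma>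
  for P :: "'x::finite \<Rightarrow> 'a::finite \<Rightarrow> 'x \<Rightarrow> real" and \<gamma> :: real +
  fixes r :: "'x \<Rightarrow> 'a \<Rightarrow> real" and \<alpha> :: real and M :: nat
    and y :: "nat \<Rightarrow> nat \<Rightarrow> 'x \<Rightarrow> 'a \<Rightarrow> 'x" and pol :: "nat \<Rightarrow> 'x \<Rightarrow> 'a" and K :: nat
  assumes reward_bounded: "\<And>x a. \<bar>r x a\<bar> \<le> 1"
    and alpha_nonneg: "0 \<le> \<alpha>"
    and greedy: "\<And>k x. k \<le> K \<Longrightarrow> mdvi_s \<gamma> \<alpha> M r y k x (pol k x) = mdvi_w \<gamma> \<alpha> M r y k x"
begin

abbreviation "q \<equiv> mdvi_q \<gamma> \<alpha> M r y"
abbreviation "v \<equiv> mdvi_v \<gamma> \<alpha> M r y"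
abbreviation "\<epsilon> \<equiv> mdvi_eps P \<gamma> \<alpha> M r y"

lemma qpi_minus_reward_le: "\<bar>qpi P r \<gamma> p x a - r x a\<bar> \<le> \<gamma> * (1 / (1 - \<gamma>))"
  by (rule qpi_minus_reward_bound) (rule reward_bounded)

lemma q_one: "q 1 x a = r x a + \<epsilon> 1 x a"
  using mdvi_q_Suc[of \<gamma> \<alpha> M r y 0 x a P] by (simp add: mdvi_v_def mdvi_w_def wmax_def)

lemma v_le_q_greedy:
  assumes "1 \<le> k" "k \<le> K"
  shows "v k x \<le> q k x (pol k x)"
proof -
  have "\<alpha> * mdvi_s \<gamma> \<alpha> M r y (k - 1) x (pol k x) \<le> \<alpha> * mdvi_w \<gamma> \<alpha> M r y (k - 1) x"
    by (intro mult_left_mono mdvi_s_le_w alpha_nonneg)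
  then show ?thesis
    using assms greedy[of k x] by (simp add: mdvi_v_def mdvi_q_def)
qed

lemma q_prev_greedy_le_v: "1 \<le> k \<Longrightarrow> k \<le> K \<Longrightarrow> q k x (pol (k - 1) x) \<le> v k x"
  using mdvi_s_le_w[of \<gamma> \<alpha> M r y k x "pol (k - 1) x"] greedy[of "k - 1" x]
  by (simp add: mdvi_v_def mdvi_q_def)

lemma q_Suc_le:
  assumes "1 \<le> k" "k \<le> K"
  shows "q (Suc k) x a \<le> r x a + \<gamma> * Ppi P (pol k) (q k) x a + \<epsilon> (Suc k) x a"
proof -
  have "Ppi P (pol k) (\<lambda>z b. v k z) x a \<le> Ppi P (pol k) (q k) x a"
    by (rule Ppi_mono) (use v_le_q_greedy[OF assms] in simp)
  then show ?thesis
    by (simp add: mdvi_q_Suc[where P = P] Ppi_state_function mult_left_mono discount_nonneg)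
qed

lemma q_Suc_ge:
  assumes "1 \<le> k" "k \<le> K"
  shows "r x a + \<gamma> * Ppi P (pol (k - 1)) (q k) x a + \<epsilon> (Suc k) x a \<le> q (Suc k) x a"
proof -
  have "Ppi P (pol (k - 1)) (q k) x a \<le> Ppi P (pol (k - 1)) (\<lambda>z b. v k z) x a"
    by (rule Ppi_mono) (use q_prev_greedy_le_v[OF assms] in simp)
  then show ?thesis
    by (simp add: mdvi_q_Suc[where P = P] Ppi_state_function mult_left_mono discount_nonneg)
qed

lemma q_upper:
  assumes "1 \<le> k" "k \<le> K"
  shows "q k x a \<le> Qns P r \<gamma> pol k x a + propagated_error P pol \<gamma> \<epsilon> k x a + \<gamma> ^ k * (1 / (1 - \<gamma>))"
proof -
  define d where
    "d = (\<lambda>k x a. q k x a - Qns P r \<gamma> pol k x a - propagated_error P pol \<gamma> \<epsilon> k x a)"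
  have "d k x a \<le> \<gamma> ^ (k - 1) * (\<gamma> * (1 / (1 - \<gamma>)))"
  proof (rule discounted_subsolution_decay[OF _ _ assms])
    show "d 1 x a \<le> \<gamma> * (1 / (1 - \<gamma>))" for x a
      using qpi_minus_reward_le[of "pol 0" x a] q_one[of x a]
      by (simp add: d_def propagated_error_def abs_le_iff)
    show "d (Suc k) x a \<le> \<gamma> * Ppi P (pol k) (d k) x a" if "1 \<le> k" "k < K" for k x a
    proof -
      have "\<gamma> * Ppi P (pol k) (d k) x a = \<gamma> * Ppi P (pol k) (q k) x a
          - \<gamma> * Ppi P (pol k) (Qns P r \<gamma> pol k) x a
          - \<gamma> * Ppi P (pol k) (propagated_error P pol \<gamma> \<epsilon> k) x a"
        unfolding d_def by (simp only: Ppi_diff right_diff_distrib)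
      moreover have "d (Suc k) x a = q (Suc k) x a
          - (r x a + \<gamma> * Ppi P (pol k) (Qns P r \<gamma> pol k) x a)
          - (\<epsilon> (Suc k) x a + \<gamma> * Ppi P (pol k) (propagated_error P pol \<gamma> \<epsilon> k) x a)"
        by (simp add: d_def Qns_Suc Tpi_def propagated_error_Suc)
      ultimately show ?thesis
        using q_Suc_le[OF that(1) less_imp_le[OF that(2)], of x a] by linarith
    qed
  qed
  then show ?thesis
    using assms(1) by (simp add: d_def power_eq_if mult_ac)
qed

lemma q_lower:
  assumes "1 \<le> k" "k \<le> K"
  shows "Qns P r \<gamma> pol (k - 1) x a + propagated_error P (\<lambda>i. pol (i - 1)) \<gamma> \<epsilon> k x a
    - \<gamma> ^ k * (1 / (1 - \<gamma>)) \<le> q k x a"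
proof -
  define d where "d = (\<lambda>k x a. Qns P r \<gamma> pol (k - 1) x a
      + propagated_error P (\<lambda>i. pol (i - 1)) \<gamma> \<epsilon> k x a - q k x a)"
  have "d k x a \<le> \<gamma> ^ (k - 1) * (\<gamma> * (1 / (1 - \<gamma>)))"
  proof (rule discounted_subsolution_decay[OF _ _ assms])
    show "d 1 x a \<le> \<gamma> * (1 / (1 - \<gamma>))" for x a
      using qpi_minus_reward_le[of "pol 0" x a] q_one[of x a]
      by (simp add: d_def propagated_error_def abs_le_iff)
    show "d (Suc k) x a \<le> \<gamma> * Ppi P (pol (k - 1)) (d k) x a" if "1 \<le> k" "k < K" for k x a
    proof -
      have "\<gamma> * Ppi P (pol (k - 1)) (d k) x a
          = \<gamma> * Ppi P (pol (k - 1)) (Qns P r \<gamma> pol (k - 1)) x a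
          + \<gamma> * Ppi P (pol (k - 1)) (propagated_error P (\<lambda>i. pol (i - 1)) \<gamma> \<epsilon> k) x a
          - \<gamma> * Ppi P (pol (k - 1)) (q k) x a"
        unfolding d_def by (simp only: Ppi_diff Ppi_add right_diff_distrib distrib_left)
      moreover have "Qns P r \<gamma> pol k x a
          = r x a + \<gamma> * Ppi P (pol (k - 1)) (Qns P r \<gamma> pol (k - 1)) x a"
        using Qns_Suc[of r pol "k - 1"] that(1) by (simp add: Tpi_def)
      moreover have "d (Suc k) x a = Qns P r \<gamma> pol k x a
          + (\<epsilon> (Suc k) x a
             + \<gamma> * Ppi P (pol (k - 1)) (propagated_error P (\<lambda>i. pol (i - 1)) \<gamma> \<epsilon> k) x a)
          - q (Suc k) x a"
        by (simp add: d_def propagated_error_Suc)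
      ultimately show ?thesis
        using q_Suc_ge[OF that(1) less_imp_le[OF that(2)], of x a] by linarith
    qed
  qed
  then show ?thesis
    using assms(1) by (simp add: d_def power_eq_if mult_ac)
qed

end

theorem lemma25:
  fixes P :: "'x::finite \<Rightarrow> 'a::finite \<Rightarrow> 'x \<Rightarrow> real"
    and r :: "'x \<Rightarrow> 'a \<Rightarrow> real"
    and \<gamma> \<alpha> :: real and K M :: nat
    and y :: "nat \<Rightarrow> nat \<Rightarrow> 'x \<Rightarrow> 'a \<Rightarrow> 'x"
    and pol :: "nat \<Rightarrow> 'x \<Rightarrow> 'a"
  assumes gamma: "0 \<le> \<gamma>" "\<gamma> < 1"
    and alpha: "0 \<le> \<alpha>" "\<alpha> < 1"
    and KM: "0 < K" "0 < M"
    and rew: "\<And>x a. \<bar>r x a\<bar> \<le> 1"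
    and Pnn: "\<And>x a z. 0 \<le> P x a z"
    and Psum: "\<And>x a. (\<Sum>z\<in>UNIV. P x a z) = 1"
    and samples: "\<And>k m x a. 0 < P x a (y k m x a)"
    and greedy: "\<And>k x. k \<le> K \<Longrightarrow> mdvi_s \<gamma> \<alpha> M r y k x (pol k x) = mdvi_w \<gamma> \<alpha> M r y k x"
    and k: "1 \<le> k" "k \<le> K"
  shows "\<forall>x.
      vns P r \<gamma> pol (k - 1) x
        + (\<Sum>j<k. \<gamma> ^ j * Pji P pol (int k - 1 - int j) (int k - 2)
                              (mdvi_eps P \<gamma> \<alpha> M r y (k - j)) x (pol (k - 1) x))
        - \<gamma> ^ k * (1 / (1 - \<gamma>))
      \<le> mdvi_v \<gamma> \<alpha> M r y k x
    \<and> mdvi_v \<gamma> \<alpha> M r y k x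
      \<le> vns P r \<gamma> pol k x
        + (\<Sum>j<k. \<gamma> ^ j * Pji P pol (int k - int j) (int k - 1)
                              (mdvi_eps P \<gamma> \<alpha> M r y (k - j)) x (pol k x))
        + \<gamma> ^ k * (1 / (1 - \<gamma>))"
proof -
  interpret mdvi P \<gamma> r \<alpha> M y pol K
    by unfold_locales (use Pnn Psum gamma rew alpha greedy in auto)
  have "vns P r \<gamma> pol (k - 1) x + propagated_error P (\<lambda>i. pol (i - 1)) \<gamma> \<epsilon> k x (pol (k - 1) x)
      - \<gamma> ^ k * (1 / (1 - \<gamma>)) \<le> v k x" for x
    unfolding vns_def using q_lower[OF k] q_prev_greedy_le_v[OF k] by (rule order_trans)
  moreover have "v k x
      \<le> vns P r \<gamma> pol k x + propagated_error P pol \<gamma> \<epsilon> k x (pol k x) + \<gamma> ^ k * (1 / (1 - \<gamma>))" for x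
    unfolding vns_def using v_le_q_greedy[OF k] q_upper[OF k] by (rule order_trans)
  ultimately show ?thesis
    unfolding sum_Pji_eq_propagated_error sum_Pji_prev_eq_propagated_error[OF k(1)] by blast
qed

end
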